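(* Let $A$ be a nice $\mathcal{E}(2)$-algebra over $\mathbb{F}_2$ (see context). If $a\in A^d$ and $b\in A^d$ are two elements of the same degree $d$, then $$a\cup_d b=b\cup_d a.$$
   Context: All vector spaces are over $\mathbb{F}_2$. Let $\mathcal{E}(2)$ be the cochain complex (negatively graded) with $\mathcal{E}(2)_i=\mathbb{F}_2\langle e_i,\tau_i\rangle$ for $i\ge 0$, differential $d e_i=d\tau_i=e_{i-1}+\tau_{i-1}$ ($d e_0=d\tau_0=0$), with $\Sigma_2$ acting by $\tau.e_k=\tau_k$, $\tau.\tau_k=e_k$. An $\mathcal{E}(2)$-algebra structure on a cochain complex $A^*$ is a cochain map $\psi:\mathcal{E}(2)\otimes A^{\otimes 2}\to A$ that is $\Sigma_2$-equivariant (with $\Sigma_2$ acting on $\mathrm{Hom}(A^{\otimes 2},A)$ by $(\tau.f)(v_1\otimes v_2)=f(v_2\otimes v_1)$). Writing $x_1\cup_i x_2=\psi(e_i\otimes x_1\otimes x_2)$, this is equivalent to giving linear maps $\cup_i:A^r\otimes A^s\to A^{r+s-i}$ ($i\ge0$) with $\psi(\tau_i\otimes x_1\otimes x_2)=x_2\cup_i x_1$ and the Leibniz rule $\delta(x_1\cup_i x_2)=x_1\cup_{i-1}x_2+x_2\cup_{i-1}x_1+\delta x_1\cup_i x_2+x_1\cup_i\delta x_2$ (with $\cup_{-1}=0$). The $\mathcal{E}(2)$-algebra $A$ is nice if for all homogeneous $x,x'\in A$ of degrees $|x|,|x'|$: (i) $x\cup_{|x|}x=x$; (ii) $x\cup_i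 x'=0$ whenever $i>\min(|x|,|x'|)$. *)

theory Defs
  imports Main
begin

text \<open>A cochain complex of F2-vector spaces A^n (n :: int) is modelled inside an ambient
  abelian group of exponent 2 (= an F2-vector space); A n is the set of homogeneous
  elements of degree n, the components intersect pairwise only in 0.
  dlt is the differential, cup i x y is x cup_i y.\<close>

definition F2_space_char2 :: "'a::ab_group_add itself \<Rightarrow> bool" where
  "F2_space_char2 _ \<longleftrightarrow> (\<forall>x::'a. x + x = 0)"

definition cochain_complex_F2 :: "(int \<Rightarrow> 'a::ab_group_add set) \<Rightarrow> ('a \<Rightarrow> 'a) \<Rightarrow> bool" where
  "cochain_complex_F2 A dlt \<longleftrightarrow>
     F2_space_char2 TYPE('a) \<and>
     (\<forall>n. 0 \<in> A n \<and> (\<forall>x\<in>A n. \<forall>y\<in>A n. x + y \<in> A n)) \<and>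
     (\<forall>m n. m \<noteq> n \<longrightarrow> A m \<inter> A n = {0}) \<and>
     (\<forall>n. \<forall>x\<in>A n. dlt x \<in> A (n + 1)) \<and>
     (\<forall>n. \<forall>x\<in>A n. \<forall>y\<in>A n. dlt (x + y) = dlt x + dlt y) \<and>
     (\<forall>n. \<forall>x\<in>A n. dlt (dlt x) = 0)"

definition E2_algebra :: "(int \<Rightarrow> 'a::ab_group_add set) \<Rightarrow> ('a \<Rightarrow> 'a) \<Rightarrow> (nat \<Rightarrow> 'a \<Rightarrow> 'a \<Rightarrow> 'a) \<Rightarrow> bool" where
  "E2_algebra A dlt cup \<longleftrightarrow>
     cochain_complex_F2 A dlt \<and>
     (\<forall>i r s. \<forall>x\<in>A r. \<forall>y\<in>A s. cup i x y \<in> A (r + s - int i)) \<and>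
     (\<forall>i r s. \<forall>x\<in>A r. \<forall>x'\<in>A r. \<forall>y\<in>A s. cup i (x + x') y = cup i x y + cup i x' y) \<and>
     (\<forall>i r s. \<forall>x\<in>A r. \<forall>y\<in>A s. \<forall>y'\<in>A s. cup i x (y + y') = cup i x y + cup i x y') \<and>
     (\<forall>i r s. \<forall>x\<in>A r. \<forall>y\<in>A s.
        dlt (cup i x y) =
          (if i = 0 then 0 else cup (i - 1) x y + cup (i - 1) y x)
          + cup i (dlt x) y + cup i x (dlt y))"

definition nice_E2_algebra :: "(int \<Rightarrow> 'a::ab_group_add set) \<Rightarrow> ('a \<Rightarrow> 'a) \<Rightarrow> (nat \<Rightarrow> 'a \<Rightarrow> 'a \<Rightarrow> 'a) \<Rightarrow> bool" where
  "nice_E2_algebra A dlt cup \<longleftrightarrow>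
     E2_algebra A dlt cup \<and>
     (\<forall>d::nat. \<forall>x\<in>A (int d). cup d x x = x) \<and>
     (\<forall>i r s. \<forall>x\<in>A r. \<forall>x'\<in>A s. int i > min r s \<longrightarrow> cup i x x' = 0)"

end

theory Submission
  imports Defs
begin

text \<open>Expanding the idempotence (a + b) cup_d (a + b) = a + b by bilinearity leaves
  a cup_d b + b cup_d a = 0, which in characteristic 2 is the claimed symmetry.\<close>

lemma char2_add_eq_0_imp_eq:
  fixes u v :: "'a::ab_group_add"
  assumes "F2_space_char2 TYPE('a)" and "u + v = 0"
  shows "u = v"
  using assms by (metis F2_space_char2_def add_right_cancel)

lemma idempotent_bilinear_commute:
  fixes m :: "'a::ab_group_add \<Rightarrow> 'a \<Rightarrow> 'a" and S :: "'a set"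
  assumes char2: "F2_space_char2 TYPE('a)"
    and add_closed: "\<And>x y. x \<in> S \<Longrightarrow> y \<in> S \<Longrightarrow> x + y \<in> S"
    and add_left: "\<And>x x' y. x \<in> S \<Longrightarrow> x' \<in> S \<Longrightarrow> y \<in> S \<Longrightarrow> m (x + x') y = m x y + m x' y"
    and add_right: "\<And>x y y'. x \<in> S \<Longrightarrow> y \<in> S \<Longrightarrow> y' \<in> S \<Longrightarrow> m x (y + y') = m x y + m x y'"
    and idem: "\<And>x. x \<in> S \<Longrightarrow> m x x = x"
    and a: "a \<in> S" and b: "b \<in> S"
  shows "m a b = m b a"
proof -
  have "a + b = m (a + b) (a + b)" using idem add_closed a b by simp
  also have "\<dots> = m a (a + b) + m b (a + b)" using add_left add_closed a b by simp
  also have "\<dots> = m a a + m a b + (m b a + m b b)" using add_right a b by simp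
  also have "\<dots> = a + m a b + (m b a + b)" using idem a b by simp
  finally have "m a b + m b a = 0" by (simp add: algebra_simps)
  with char2 show ?thesis by (rule char2_add_eq_0_imp_eq)
qed

theorem lemma2p4:
  fixes A :: "int \<Rightarrow> 'a::ab_group_add set" and dlt :: "'a \<Rightarrow> 'a"
    and cup :: "nat \<Rightarrow> 'a \<Rightarrow> 'a \<Rightarrow> 'a" and d :: nat and a b :: 'a
  assumes "nice_E2_algebra A dlt cup"
    and "a \<in> A (int d)" and "b \<in> A (int d)"
  shows "cup d a b = cup d b a"
proof -
  have alg: "E2_algebra A dlt cup" and idem: "\<forall>x\<in>A (int d). cup d x x = x"
    using assms(1) unfolding nice_E2_algebra_def by auto
  have cx: "cochain_complex_F2 A dlt"
    using alg unfolding E2_algebra_def by simp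
  show ?thesis
  proof (rule idempotent_bilinear_commute[where S = "A (int d)" and m = "cup d"])
    show "F2_space_char2 TYPE('a)"
      using cx unfolding cochain_complex_F2_def by simp
    show "\<And>x y. x \<in> A (int d) \<Longrightarrow> y \<in> A (int d) \<Longrightarrow> x + y \<in> A (int d)"
      using cx unfolding cochain_complex_F2_def by blast
  qed (use alg idem assms(2,3) in \<open>simp_all add: E2_algebra_def\<close>)
qed

end
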